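(* Let $d=2\delta$, $H\ge1$, $T_{\max}\ge2$, and consider the orthogonal setting of the context. Let $\theta^*=(\mathtt{A}^*,\mathtt{B}^*,P^* )$ satisfy $\ell(\theta^* )=0$, and set $\mathtt{C}^*=\mathtt{B}^{*\top}\mathtt{A}^*$. Then for every $T\in\{2,\dots,T_{\max}\}$, writing $p^*=(P^*_{T-1,1},\dots,P^*_{T-1,T})$: (i) $p^*_t=0$ for all $t<T-1$; (ii) $p^*_T\,\mathtt{C}^*_{i,i}=1$ for all $i\in\{1,\dots,d\}$; (iii) for every $i\in\{1,\dots,\delta\}$: $p^*_T\mathtt{C}^*_{2i-1,2i}+(\mathtt{C}^*_{2i-1,2i-1}+\mathtt{C}^*_{2i-1,2i})p^*_{T-1}=0$ and $p^*_T\mathtt{C}^*_{2i,2i-1}+(\mathtt{C}^*_{2i,2i}+\mathtt{C}^*_{2i,2i-1})p^*_{T-1}=0$; (iv) $\mathtt{C}^*_{2i-1,j}=\mathtt{C}^*_{2i,j}=0$ for all $i\in\{1,\dots,\delta\}$ and $j\notin\{2i-1,2i\}$.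
   Context: Orthogonal setting: $\mu\in\mathbb{C}^\delta$ has i.i.d. coordinates uniform on the unit circle, $\lambda=(\mu_1,\bar\mu_1,\dots,\mu_\delta,\bar\mu_\delta)\in\mathbb{C}^d$, and $s_t=e_t=\lambda^{t-1}$ (coordinatewise powers). Parameters $\mathtt{A},\mathtt{B}\in\mathbb{R}^{H\times d}$ with rows $a_h,b_h\in\mathbb{R}^d$ and $P\in\mathbb{R}^{T_{\max}\times T_{\max}}$. Model: $\mathcal{T}_\theta(e_{1:T})=\sum_{h=1}^H\sum_{t=1}^T P_{T-1,t}\langle e_t,\mathrm{diag}(a_h)e_{T-1}\rangle_{\mathbb{C}}\mathrm{diag}(b_h)e_t$, $\langle x,y\rangle_{\mathbb{C}}=\sum_i x_i\bar y_i$. Loss: $\ell(\theta)=\sum_{T=2}^{T_{\max}}\mathbb{E}\|\mathcal{T}_\theta(e_{1:T})-s_{T+1}\|^2$ (Hermitian norm). *)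

theory Defs
  imports "HOL-Probability.Probability"
begin

text \<open>Orthogonal setting. All vectors/matrices are 1-indexed functions on nat;
  delta = number of circle coordinates, d = 2 delta.
  mu :: nat => complex with coordinates mu 1, ..., mu delta.\<close>

definition circle_unif :: "complex measure" where
  "circle_unif = distr (uniform_measure lborel {0..2*pi}) borel cis"

definition mu_law :: "nat \<Rightarrow> (nat \<Rightarrow> complex) measure" where
  "mu_law \<delta> = PiM {1..\<delta>} (\<lambda>_. circle_unif)"

definition lam :: "(nat \<Rightarrow> complex) \<Rightarrow> nat \<Rightarrow> complex" where
  "lam \<mu> j = (if odd j then \<mu> ((j + 1) div 2) else cnj (\<mu> (j div 2)))"

text \<open>e_t = s_t = lambda^(t-1), coordinatewise.\<close>
definition evec :: "(nat \<Rightarrow> complex) \<Rightarrow> nat \<Rightarrow> nat \<Rightarrow> complex" where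
  "evec \<mu> t j = (lam \<mu> j) ^ (t - 1)"

definition cinner :: "nat \<Rightarrow> (nat \<Rightarrow> complex) \<Rightarrow> (nat \<Rightarrow> complex) \<Rightarrow> complex" where
  "cinner d x y = (\<Sum>i=1..d. x i * cnj (y i))"

text \<open>Model output T_theta(e_{1:T}), coordinate j. A, B: rows h in 1..H, columns in 1..d.\<close>
definition model :: "nat \<Rightarrow> nat \<Rightarrow> (nat \<Rightarrow> nat \<Rightarrow> real) \<Rightarrow> (nat \<Rightarrow> nat \<Rightarrow> real) \<Rightarrow>
    (nat \<Rightarrow> nat \<Rightarrow> real) \<Rightarrow> (nat \<Rightarrow> complex) \<Rightarrow> nat \<Rightarrow> nat \<Rightarrow> complex" where
  "model \<delta> H A B P \<mu> T j =
     (\<Sum>h=1..H. \<Sum>t=1..T.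
        of_real (P (T - 1) t)
        * cinner (2 * \<delta>) (evec \<mu> t) (\<lambda>i. of_real (A h i) * evec \<mu> (T - 1) i)
        * (of_real (B h j) * evec \<mu> t j))"

definition sq_err :: "nat \<Rightarrow> nat \<Rightarrow> (nat \<Rightarrow> nat \<Rightarrow> real) \<Rightarrow> (nat \<Rightarrow> nat \<Rightarrow> real) \<Rightarrow>
    (nat \<Rightarrow> nat \<Rightarrow> real) \<Rightarrow> (nat \<Rightarrow> complex) \<Rightarrow> nat \<Rightarrow> real" where
  "sq_err \<delta> H A B P \<mu> T =
     (\<Sum>j=1..2 * \<delta>. (cmod (model \<delta> H A B P \<mu> T j - evec \<mu> (T + 1) j))\<^sup>2)"

definition loss :: "nat \<Rightarrow> nat \<Rightarrow> nat \<Rightarrow> (nat \<Rightarrow> nat \<Rightarrow> real) \<Rightarrow> (nat \<Rightarrow> nat \<Rightarrow> real) \<Rightarrow>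
    (nat \<Rightarrow> nat \<Rightarrow> real) \<Rightarrow> real" where
  "loss \<delta> H Tmax A B P =
     (\<Sum>T=2..Tmax. \<integral>\<mu>. sq_err \<delta> H A B P \<mu> T \<partial>(mu_law \<delta>))"

definition Cmat :: "nat \<Rightarrow> (nat \<Rightarrow> nat \<Rightarrow> real) \<Rightarrow> (nat \<Rightarrow> nat \<Rightarrow> real) \<Rightarrow> nat \<Rightarrow> nat \<Rightarrow> real" where
  "Cmat H A B i j = (\<Sum>h=1..H. B h i * A h j)"

end

theory Submission
  imports Defs
begin

text \<open>
  A vanishing loss makes the nonnegative, continuous squared error vanish almost surely, and since
  the law of mu charges every box around a point of the torus, it vanishes on the whole torus. There,
  coordinate j of the model is the trigonometric polynomial
  sum_{t,i} P_{T-1,t} C_{j,i} lambda_i^(t-T+1) lambda_j^(t-1), while the target is lambda_j^T.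
  Evaluating at mu_m = omega^(r f_m) for roots of unity omega of large order and averaging over r
  compares the coefficients of each frequency, for every integer frequency vector f. A frequency
  vector supported on the block of j, plus a large frequency on a second block, isolates single
  products P_{T-1,t} C_{j,i}: this gives P_{T-1,T} C_{j,j} = 1, then the vanishing of row j outside
  its block, then P_{T-1,t} = 0 for t < T - 1, and finally the relation with the partner entry.
\<close>

definition torus :: "nat \<Rightarrow> (nat \<Rightarrow> complex) set" where
  "torus \<delta> = {\<mu>. \<forall>m\<in>{1..\<delta>}. cmod (\<mu> m) = 1}"

lemma borel_measurable_cis_uniform: "cis \<in> borel_measurable (uniform_measure lborel {0..2*pi})"
proof -
  have "cis \<in> borel_measurable borel"
    by (intro borel_measurable_continuous_onI continuous_intros)
  then show ?thesis by (simp add: measurable_cong_sets[OF sets_uniform_measure refl])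
qed

lemma prob_space_circle_unif: "prob_space circle_unif"
  unfolding circle_unif_def
  by (intro prob_space.prob_space_distr prob_space_uniform_measure borel_measurable_cis_uniform) auto

lemma prob_space_mu_law: "prob_space (mu_law \<delta>)"
  unfolding mu_law_def by (intro prob_space_PiM prob_space_circle_unif)

lemma sets_circle_unif [simp]: "sets circle_unif = sets borel"
  unfolding circle_unif_def by simp

lemma space_mu_law: "space (mu_law \<delta>) = PiE {1..\<delta>} (\<lambda>_. UNIV)"
  unfolding mu_law_def by (simp add: space_PiM circle_unif_def)

lemma AE_mu_law_torus: "AE \<mu> in mu_law \<delta>. \<mu> \<in> torus \<delta>"
proof -
  have "AE z in circle_unif. cmod z = 1"
    unfolding circle_unif_def by (subst AE_distr_iff) (auto simp: borel_measurable_cis_uniform)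
  then show ?thesis
    unfolding mu_law_def torus_def mem_Collect_eq
    by (intro AE_finite_allI finite_atLeastAtMost AE_PiM_component[where P="\<lambda>z. cmod z = 1"]
        prob_space_circle_unif) simp_all
qed

lemma lam_eq_coordinate:
  assumes "j \<in> {1..2*\<delta>}"
  obtains m where "m \<in> {1..\<delta>}"
    and "(\<forall>\<mu>. lam \<mu> j = \<mu> m) \<or> (\<forall>\<mu>. lam \<mu> j = cnj (\<mu> m))"
proof (cases "odd j")
  case True
  then show ?thesis using assms by (intro that[of "(j + 1) div 2"]) (auto simp: lam_def elim!: oddE)
next
  case False
  then show ?thesis using assms by (intro that[of "j div 2"]) (auto simp: lam_def)
qed

lemma borel_measurable_sq_err: "(\<lambda>\<mu>. sq_err \<delta> H A B P \<mu> T) \<in> borel_measurable (mu_law \<delta>)"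
proof -
  have cnj: "(\<lambda>\<mu>. cnj (f \<mu>)) \<in> borel_measurable (mu_law \<delta>)"
    if "f \<in> borel_measurable (mu_law \<delta>)" for f :: "_ \<Rightarrow> complex"
    by (rule borel_measurable_continuous_on[OF _ that]) (intro continuous_intros)
  have coord: "(\<lambda>\<mu>. \<mu> m) \<in> borel_measurable (mu_law \<delta>)" if "m \<in> {1..\<delta>}" for m
  proof -
    have "(\<lambda>\<mu>. \<mu> m) \<in> measurable (mu_law \<delta>) circle_unif"
      unfolding mu_law_def using that by (rule measurable_component_singleton)
    then show ?thesis by (simp add: measurable_cong_sets[OF refl sets_circle_unif])
  qed
  have lam: "(\<lambda>\<mu>. lam \<mu> j) \<in> borel_measurable (mu_law \<delta>)" if j: "j \<in> {1..2*\<delta>}" for j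
  proof -
    obtain m where "m \<in> {1..\<delta>}"
      "(\<forall>\<mu>. lam \<mu> j = \<mu> m) \<or> (\<forall>\<mu>. lam \<mu> j = cnj (\<mu> m))"
      using lam_eq_coordinate[OF j] .
    then show ?thesis using coord cnj by auto
  qed
  show ?thesis
    unfolding sq_err_def model_def cinner_def evec_def
    by (intro borel_measurable_sum borel_measurable_power borel_measurable_diff
        borel_measurable_continuous_on[where f=norm] continuous_on_norm_id
        borel_measurable_times borel_measurable_const cnj lam) simp_all
qed

lemma norm_evec_torus:
  assumes "\<mu> \<in> torus \<delta>" "j \<in> {1..2*\<delta>}"
  shows "cmod (evec \<mu> t j) = 1"
proof -
  obtain m where "m \<in> {1..\<delta>}"
    "(\<forall>\<mu>. lam \<mu> j = \<mu> m) \<or> (\<forall>\<mu>. lam \<mu> j = cnj (\<mu> m))"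
    using lam_eq_coordinate[OF assms(2)] .
  then have "cmod (lam \<mu> j) = 1" using assms(1) unfolding torus_def by auto
  then show ?thesis unfolding evec_def by (simp add: norm_power)
qed

lemma norm_model_le:
  assumes "\<mu> \<in> torus \<delta>" "j \<in> {1..2*\<delta>}"
  shows "cmod (model \<delta> H A B P \<mu> T j)
    \<le> (\<Sum>h=1..H. \<Sum>t=1..T. \<bar>P (T-1) t\<bar> * (\<Sum>i=1..2*\<delta>. \<bar>A h i\<bar>) * \<bar>B h j\<bar>)"
proof -
  have "cmod (cinner (2*\<delta>) (evec \<mu> t) (\<lambda>i. of_real (A h i) * evec \<mu> (T - 1) i))
      \<le> (\<Sum>i=1..2*\<delta>. \<bar>A h i\<bar>)" for t h
    unfolding cinner_def
    by (rule order_trans[OF norm_sum], rule sum_mono) (simp add: norm_mult norm_evec_torus[OF assms(1)])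
  then show ?thesis
    unfolding model_def
    by (intro order_trans[OF norm_sum] sum_mono)
      (simp add: norm_mult norm_evec_torus[OF assms] mult_right_mono mult_left_mono)
qed

lemma sq_err_nonneg: "0 \<le> sq_err \<delta> H A B P \<mu> T"
  unfolding sq_err_def by (intro sum_nonneg) auto

lemma integrable_sq_err: "integrable (mu_law \<delta>) (\<lambda>\<mu>. sq_err \<delta> H A B P \<mu> T)"
proof -
  interpret prob_space "mu_law \<delta>" by (rule prob_space_mu_law)
  define K where "K j = (\<Sum>h=1..H. \<Sum>t=1..T. \<bar>P (T-1) t\<bar> * (\<Sum>i=1..2*\<delta>. \<bar>A h i\<bar>) * \<bar>B h j\<bar>)" for j
  have "norm (sq_err \<delta> H A B P \<mu> T) \<le> (\<Sum>j=1..2*\<delta>. (K j + 1)\<^sup>2)" if "\<mu> \<in> torus \<delta>" for \<mu>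
  proof -
    have "cmod (model \<delta> H A B P \<mu> T j - evec \<mu> (T + 1) j) \<le> K j + 1" if "j \<in> {1..2*\<delta>}" for j
      using norm_triangle_ineq4[of "model \<delta> H A B P \<mu> T j" "evec \<mu> (T + 1) j"]
        norm_model_le[OF \<open>\<mu> \<in> torus \<delta>\<close> that, of H A B P T] norm_evec_torus[OF \<open>\<mu> \<in> torus \<delta>\<close> that, of "T + 1"]
      unfolding K_def by linarith
    then show ?thesis
      unfolding sq_err_def using sq_err_nonneg[unfolded sq_err_def]
      by (auto intro!: sum_mono power_mono)
  qed
  then show ?thesis
    using AE_mu_law_torus[of \<delta>] by (intro integrable_const_bound[OF _ borel_measurable_sq_err]) auto
qed

lemma AE_sq_err_eq_0:
  assumes "loss \<delta> H Tmax A B P = 0" "T \<in> {2..Tmax}"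
  shows "AE \<mu> in mu_law \<delta>. sq_err \<delta> H A B P \<mu> T = 0"
proof -
  have "\<forall>T\<in>{2..Tmax}. (\<integral>\<mu>. sq_err \<delta> H A B P \<mu> T \<partial>mu_law \<delta>) = 0"
    using assms(1) unfolding loss_def
    by (subst (asm) sum_nonneg_eq_0_iff) (auto intro: integral_nonneg_AE simp: sq_err_nonneg)
  then show ?thesis
    using assms(2) by (subst (asm) integral_nonneg_eq_0_iff_AE[OF integrable_sq_err]) (auto simp: sq_err_nonneg)
qed

lemma tendsto_sq_err:
  assumes "\<forall>m\<in>{1..\<delta>}. (\<lambda>n. s n m) \<longlonglongrightarrow> \<mu> m"
  shows "(\<lambda>n. sq_err \<delta> H A B P (s n) T) \<longlonglongrightarrow> sq_err \<delta> H A B P \<mu> T"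
proof -
  have lam: "(\<lambda>n. lam (s n) j) \<longlonglongrightarrow> lam \<mu> j" if j: "j \<in> {1..2*\<delta>}" for j
  proof -
    obtain m where "m \<in> {1..\<delta>}"
      "(\<forall>\<mu>. lam \<mu> j = \<mu> m) \<or> (\<forall>\<mu>. lam \<mu> j = cnj (\<mu> m))"
      using lam_eq_coordinate[OF j] .
    then show ?thesis using assms by (auto intro!: tendsto_cnj)
  qed
  show ?thesis
    unfolding sq_err_def model_def cinner_def evec_def
    by (intro tendsto_sum tendsto_power tendsto_norm tendsto_diff tendsto_mult tendsto_const tendsto_cnj lam)
      simp
qed

lemma emeasure_circle_unif_ball_pos:
  assumes "cmod z = 1" "0 < \<epsilon>"
  shows "0 < emeasure circle_unif (ball z \<epsilon>)"
proof -
  define \<theta> where "\<theta> = Arg2pi z"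
  have \<theta>: "0 \<le> \<theta>" "\<theta> < 2*pi" "cis \<theta> = z"
    using Arg2pi_ge_0 Arg2pi_lt_2pi complex_norm_eq_1_exp assms(1) by (auto simp: \<theta>_def cis_conv_exp)
  have "continuous_on UNIV cis" by (intro continuous_intros)
  then have "isCont cis \<theta>" by (simp add: continuous_on_eq_continuous_at)
  then obtain \<eta> where \<eta>: "0 < \<eta>" "\<forall>x. dist x \<theta> < \<eta> \<longrightarrow> dist (cis x) z < \<epsilon>"
    using assms(2) \<theta>(3) unfolding continuous_at_eps_delta by metis
  define s where "s = min (\<eta>/2) (2*pi - \<theta>)"
  have s: "0 < s" "s < \<eta>" "\<theta> + s \<le> 2*pi" using \<eta>(1) \<theta>(2) unfolding s_def by auto
  have "cis \<in> borel_measurable borel"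
    by (intro borel_measurable_continuous_onI continuous_intros)
  from measurable_sets[OF this, of "ball z \<epsilon>"]
  have cis_meas: "cis -` ball z \<epsilon> \<inter> UNIV \<in> sets lborel" by simp
  have "{\<theta>..\<theta> + s} \<subseteq> {0..2*pi} \<inter> (cis -` ball z \<epsilon> \<inter> UNIV)"
    using \<theta> s \<eta>(2) by (auto simp: dist_real_def dist_commute)
  then have "emeasure lborel {\<theta>..\<theta> + s} \<le> emeasure lborel ({0..2*pi} \<inter> (cis -` ball z \<epsilon> \<inter> UNIV))"
    using cis_meas by (intro emeasure_mono) auto
  moreover have "emeasure circle_unif (ball z \<epsilon>)
      = emeasure lborel ({0..2*pi} \<inter> (cis -` ball z \<epsilon> \<inter> UNIV)) / emeasure lborel {0..2*pi}"
    unfolding circle_unif_def using cis_meas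
    by (simp add: emeasure_distr[OF borel_measurable_cis_uniform])
  ultimately show ?thesis
    using s(1) by (auto simp: ennreal_zero_less_divide intro: order.strict_trans2[rotated])
qed

lemma emeasure_mu_law_box_pos:
  assumes "\<mu> \<in> torus \<delta>" "0 < \<epsilon>"
  shows "0 < emeasure (mu_law \<delta>) (PiE {1..\<delta>} (\<lambda>m. ball (\<mu> m) \<epsilon>))"
proof -
  interpret product_sigma_finite "\<lambda>_. circle_unif"
    by (auto simp: product_sigma_finite_def intro: prob_space_imp_sigma_finite prob_space_circle_unif)
  have "emeasure (mu_law \<delta>) (PiE {1..\<delta>} (\<lambda>m. ball (\<mu> m) \<epsilon>))
      = (\<Prod>m\<in>{1..\<delta>}. emeasure circle_unif (ball (\<mu> m) \<epsilon>))"
    unfolding mu_law_def by (rule emeasure_PiM) auto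
  also have "\<dots> \<noteq> 0"
    using emeasure_circle_unif_ball_pos assms unfolding torus_def by (subst ennreal_prod_eq_0) fastforce
  finally show ?thesis by (simp add: zero_less_iff_neq_zero)
qed

lemma AE_eq_0_imp_eq_0_on_torus:
  fixes g :: "(nat \<Rightarrow> complex) \<Rightarrow> real"
  assumes AE: "AE \<mu> in mu_law \<delta>. g \<mu> = 0"
    and cont: "\<And>s. \<forall>m\<in>{1..\<delta>}. (\<lambda>n. s n m) \<longlonglongrightarrow> \<mu> m \<Longrightarrow> (\<lambda>n. g (s n)) \<longlonglongrightarrow> g \<mu>"
    and "\<mu> \<in> torus \<delta>"
  shows "g \<mu> = 0"
proof -
  define box where "box n = PiE {1..\<delta>} (\<lambda>m. ball (\<mu> m) (inverse (real (Suc n))))" for n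
  from AE obtain N where N: "{\<nu> \<in> space (mu_law \<delta>). g \<nu> \<noteq> 0} \<subseteq> N"
    "emeasure (mu_law \<delta>) N = 0" "N \<in> sets (mu_law \<delta>)"
    by (rule AE_E)
  have "\<exists>\<nu>\<in>box n. g \<nu> = 0" for n
  proof (rule ccontr)
    assume "\<not> (\<exists>\<nu>\<in>box n. g \<nu> = 0)"
    then have "box n \<subseteq> N" using N(1) by (auto simp: box_def space_mu_law PiE_iff)
    then have "emeasure (mu_law \<delta>) (box n) \<le> emeasure (mu_law \<delta>) N"
      using N(3) by (rule emeasure_mono)
    then show False
      using N(2) emeasure_mu_law_box_pos[OF \<open>\<mu> \<in> torus \<delta>\<close>, of "inverse (real (Suc n))"]
      unfolding box_def by simp
  qed
  then obtain s where s: "\<And>n. s n \<in> box n" "\<And>n. g (s n) = 0" by metis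
  have "(\<lambda>n. s n m) \<longlonglongrightarrow> \<mu> m" if "m \<in> {1..\<delta>}" for m
  proof -
    have "(\<lambda>n. dist (s n m) (\<mu> m)) \<longlonglongrightarrow> 0"
    proof (rule tendsto_sandwich[OF _ _ tendsto_const LIMSEQ_inverse_real_of_nat])
      show "\<forall>\<^sub>F n in sequentially. dist (s n m) (\<mu> m) \<le> inverse (real (Suc n))"
        using s(1) that by (auto simp: box_def PiE_iff dist_commute less_imp_le)
    qed simp
    then show ?thesis by (subst tendsto_dist_iff)
  qed
  then have "(\<lambda>n. g (s n)) \<longlonglongrightarrow> g \<mu>" by (intro cont) blast
  then show ?thesis using s(2) by (simp add: LIMSEQ_const_iff)
qed

lemma model_eq_evec_on_torus:
  assumes "loss \<delta> H Tmax A B P = 0" "T \<in> {2..Tmax}" "\<mu> \<in> torus \<delta>" "j \<in> {1..2*\<delta>}"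
  shows "model \<delta> H A B P \<mu> T j = evec \<mu> (T + 1) j"
proof -
  have "sq_err \<delta> H A B P \<mu> T = 0"
    by (rule AE_eq_0_imp_eq_0_on_torus[OF AE_sq_err_eq_0[OF assms(1,2)] tendsto_sq_err assms(3)])
  then show ?thesis
    using assms(4) unfolding sq_err_def by (subst (asm) sum_nonneg_eq_0_iff) auto
qed

definition unity_root :: "nat \<Rightarrow> int \<Rightarrow> complex" where
  "unity_root N k = cis (2 * pi * of_int k / real N)"

lemma unity_root_add: "unity_root N a * unity_root N b = unity_root N (a + b)"
  unfolding unity_root_def cis_mult by (simp add: algebra_simps add_divide_distrib)

lemma unity_root_power: "unity_root N a ^ n = unity_root N (int n * a)"
  unfolding unity_root_def Complex.DeMoivre by (simp add: algebra_simps)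

lemma cnj_unity_root: "cnj (unity_root N a) = unity_root N (- a)"
  unfolding unity_root_def cis_cnj by simp

lemma sum_unity_root:
  assumes "0 < N" "\<bar>k\<bar> < int N"
  shows "(\<Sum>r<N. unity_root N (int r * k)) = (if k = 0 then of_nat N else 0)"
proof (cases "k = 0")
  case False
  define w where "w = unity_root N k"
  have w_power: "unity_root N (int r * k) = w ^ r" for r
    by (simp add: w_def unity_root_power)
  have "w \<noteq> 1"
  proof
    assume "w = 1"
    then obtain n :: int where "2 * pi * of_int k / real N = of_int n * 2 * pi"
      by (auto simp: w_def unity_root_def complex_eq_iff cos_one_2pi_int)
    then have "real_of_int k = of_int n * real N" using assms(1) by (simp add: field_simps)
    then have "k = n * int N" by (metis of_int_eq_iff of_int_mult of_int_of_nat_eq)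
    then have "int N dvd k" by simp
    then show False using dvd_imp_le_int[OF False] assms(2) by force
  qed
  moreover have "w ^ N = 1"
  proof -
    have "w ^ N = unity_root N (int N * k)" by (simp add: w_def unity_root_power)
    also have "\<dots> = 1"
    proof -
      have "2 * pi * of_int (int N * k) / real N = 2 * pi * of_int k" using assms(1) by simp
      then show ?thesis unfolding unity_root_def by simp
    qed
    finally show ?thesis .
  qed
  ultimately show ?thesis
    using False geometric_sum[of w N] by (simp add: w_power)
qed (simp add: unity_root_def)

text \<open>Averaging against omega^(-r n) over r < N, with N beyond all frequencies, isolates frequency n.\<close>

lemma coeffs_eq_if_eq_at_unity_roots:
  fixes c :: "'k \<Rightarrow> real" and x :: "'k \<Rightarrow> int"
  assumes "finite K"
    and eq: "\<And>N r. 0 < N \<Longrightarrow>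
      (\<Sum>k\<in>K. of_real (c k) * unity_root N (int r * x k)) = unity_root N (int r * y)"
  shows "(\<Sum>k\<in>{k\<in>K. x k = n}. c k) = (if y = n then 1 else 0)"
proof -
  define S where "S = (\<Sum>k\<in>K. \<bar>x k - n\<bar>)"
  define N where "N = nat (\<bar>y - n\<bar> + S) + 1"
  have "0 \<le> S" unfolding S_def by (simp add: sum_nonneg)
  then have N: "0 < N" "\<bar>y - n\<bar> < int N" unfolding N_def by auto
  have x: "\<bar>x k - n\<bar> < int N" if "k \<in> K" for k
    using member_le_sum[OF that, of "\<lambda>k. \<bar>x k - n\<bar>"] assms(1) \<open>0 \<le> S\<close>
    unfolding N_def S_def by auto
  have "of_nat N * of_real (\<Sum>k\<in>{k\<in>K. x k = n}. c k)
      = (\<Sum>k\<in>K. of_real (c k) * (if x k - n = 0 then of_nat N else 0) :: complex)"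
    using assms(1) by (auto simp: sum.inter_filter sum_distrib_left intro!: sum.cong)
  also have "\<dots> = (\<Sum>k\<in>K. \<Sum>r<N. of_real (c k) * unity_root N (int r * (x k - n)))"
    using sum_unity_root[OF N(1) x] by (simp add: sum_distrib_left[symmetric])
  also have "\<dots> = (\<Sum>r<N. (\<Sum>k\<in>K. of_real (c k) * unity_root N (int r * x k)) * unity_root N (- int r * n))"
    by (subst sum.swap) (simp add: sum_distrib_right mult.assoc unity_root_add right_diff_distrib)
  also have "\<dots> = (\<Sum>r<N. unity_root N (int r * (y - n)))"
    by (simp add: eq[OF N(1)] unity_root_add algebra_simps)
  also have "\<dots> = of_nat N * (if y = n then 1 else 0)"
    using sum_unity_root[OF N] by simp
  finally show ?thesis using N(1) by (simp del: of_real_sum split: if_split_asm)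
qed

definition lam_freq :: "(nat \<Rightarrow> int) \<Rightarrow> nat \<Rightarrow> int" where
  "lam_freq f i = (if odd i then f ((i + 1) div 2) else - f (i div 2))"

lemma lam_unity_root_point:
  "lam (\<lambda>m. unity_root N (int r * f m)) i = unity_root N (int r * lam_freq f i)"
  unfolding lam_def lam_freq_def by (simp add: cnj_unity_root)

lemma model_at_unity_root_point:
  assumes "2 \<le> T"
  shows "model \<delta> H A B P (\<lambda>m. unity_root N (int r * f m)) T j
    = (\<Sum>(t, i)\<in>{1..T} \<times> {1..2*\<delta>}. of_real (P (T-1) t * Cmat H A B j i)
        * unity_root N (int r * ((int t - int T + 1) * lam_freq f i + (int t - 1) * lam_freq f j)))"
proof -
  define \<mu> where "\<mu> = (\<lambda>m. unity_root N (int r * f m))"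
  define \<omega> where "\<omega> t i = unity_root N (int r * ((int t - int T + 1) * lam_freq f i + (int t - 1) * lam_freq f j))" for t i
  have summand: "of_real p * (evec \<mu> t i * cnj (of_real a * evec \<mu> (T - 1) i)) * (of_real b * evec \<mu> t j)
      = of_real (p * (a * b)) * \<omega> t i" if "1 \<le> t" for t i p a b
    using that assms unfolding \<omega>_def evec_def \<mu>_def lam_unity_root_point
    by (simp add: unity_root_power cnj_unity_root unity_root_add of_nat_diff algebra_simps)
  have "model \<delta> H A B P \<mu> T j
      = (\<Sum>h=1..H. \<Sum>t=1..T. \<Sum>i=1..2*\<delta>. of_real (P (T-1) t * (A h i * B h j)) * \<omega> t i)"
    unfolding model_def cinner_def sum_distrib_left sum_distrib_right
    by (intro sum.cong refl summand) simp
  also have "\<dots> = (\<Sum>t=1..T. \<Sum>i=1..2*\<delta>. of_real (P (T-1) t * Cmat H A B j i) * \<omega> t i)"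
    unfolding Cmat_def
    by (subst sum.swap, rule sum.cong[OF refl], subst sum.swap)
      (simp add: sum_distrib_left sum_distrib_right mult_ac)
  finally show ?thesis
    unfolding \<mu>_def \<omega>_def by (simp add: sum.cartesian_product)
qed

definition partner :: "nat \<Rightarrow> nat" where
  "partner i = (if odd i then i + 1 else i - 1)"

definition pair_freq :: "int \<Rightarrow> nat \<Rightarrow> nat \<Rightarrow> int" where
  "pair_freq a i m = (if m = (i + 1) div 2 then (if odd i then a else - a) else 0)"

lemma partner_neq: "1 \<le> i \<Longrightarrow> partner i \<noteq> i"
  by (auto simp: partner_def)

lemma partner_partner: "1 \<le> i \<Longrightarrow> partner (partner i) = i"
  by (auto simp: partner_def)

lemma partner_in_range: "i \<in> {1..2*\<delta>} \<Longrightarrow> partner i \<in> {1..2*\<delta>}"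
  by (auto simp: partner_def elim!: oddE; presburger)

lemma lam_freq_add: "lam_freq (\<lambda>m. f m + g m) k = lam_freq f k + lam_freq g k"
  by (simp add: lam_freq_def)

lemma lam_freq_pair_freq:
  assumes "1 \<le> i"
  shows "lam_freq (pair_freq a i) k = (if k = i then a else if k = partner i then - a else 0)"
  using assms by (auto simp: lam_freq_def pair_freq_def partner_def elim!: oddE evenE; presburger)

text \<open>
  p and c stand for row T - 1 of P and row j of C; the assumption equates, for every frequency
  vector f and frequency n, the coefficients of the model and of the target.
\<close>

locale row_coefficients =
  fixes \<delta> T j :: nat and p c :: "nat \<Rightarrow> real"
  assumes T_ge_2: "2 \<le> T" and row: "j \<in> {1..2*\<delta>}"
    and coefficients: "\<And>f n.
      (\<Sum>(t, i)\<in>{(t, i)\<in>{1..T} \<times> {1..2*\<delta>}.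
          (int t - int T + 1) * lam_freq f i + (int t - 1) * lam_freq f j = n}. p t * c i)
      = (if int T * lam_freq f j = n then 1 else 0)"
begin

definition row_freq :: "nat \<Rightarrow> int" where
  "row_freq = lam_freq (pair_freq 1 j)"

lemma row_freq_eq: "row_freq k = (if k = j then 1 else if k = partner j then -1 else 0)"
  using row unfolding row_freq_def by (simp add: lam_freq_pair_freq)

lemma diagonal: "p T * c j = 1"
proof -
  have "{(t, i)\<in>{1..T} \<times> {1..2*\<delta>}. (int t - int T + 1) * row_freq i + (int t - 1) * row_freq j = int T}
      = {(T, j)}"
    using T_ge_2 row partner_neq[of j] by (auto simp: row_freq_eq)
  then show ?thesis
    using coefficients[of "pair_freq 1 j" "int T", folded row_freq_def] by (simp add: row_freq_eq)
qed

text \<open>The weight int T + 1 exceeds every |t - T|, which keeps every monomial except (T, i) away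
  from frequency 2 T.\<close>
definition off_block_freq :: "nat \<Rightarrow> nat \<Rightarrow> int" where
  "off_block_freq i = lam_freq (\<lambda>m. pair_freq 1 j m + pair_freq (int T + 1) i m)"

lemma off_block_freq_eq:
  assumes "i \<in> {1..2*\<delta>}"
  shows "off_block_freq i k
    = row_freq k + (if k = i then int T + 1 else if k = partner i then - (int T + 1) else 0)"
  using row assms unfolding off_block_freq_def row_freq_def by (simp add: lam_freq_add lam_freq_pair_freq)

lemma off_block_resonance:
  assumes i: "i \<in> {1..2*\<delta>}" "i \<noteq> j" "i \<noteq> partner j" and t: "t \<in> {1..T}"
  shows "(int t - int T + 1) * off_block_freq i k + (int t - 1) * off_block_freq i j = 2 * int T
    \<longleftrightarrow> t = T \<and> k = i"
proof -
  define M :: int where "M = int T + 1"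
  define a where "a = int t - int T"
  have a: "1 - int T \<le> a" "a \<le> 0" using t unfolding a_def by auto
  have distinct: "partner i \<noteq> j" "partner i \<noteq> partner j" "partner i \<noteq> i" "partner j \<noteq> j"
    using i row partner_partner[of i] partner_partner[of j] partner_neq[of i] partner_neq[of j] by auto
  have g: "off_block_freq i k = (if k = j then 1 else if k = partner j then -1 else 0)
      + (if k = i then M else if k = partner i then - M else 0)" for k
    unfolding M_def off_block_freq_eq[OF i(1)] row_freq_eq ..
  consider "k = i" | "k = partner i" | "k = j" | "k = partner j" | "k \<notin> {i, partner i, j, partner j}"
    by blast
  then show ?thesis
  proof cases
    case 1
    then have "(int t - int T + 1) * off_block_freq i k + (int t - 1) * off_block_freq i j - 2 * int T
        = a * (M + 1)"
      using distinct i(2,3) unfolding a_def by (simp add: g M_def algebra_simps)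
    then show ?thesis using 1 unfolding a_def M_def by auto
  next
    case 2
    then have "(int t - int T + 1) * off_block_freq i k + (int t - 1) * off_block_freq i j - 2 * int T
        = a - (a + 2) * M"
      using distinct i(2,3) unfolding a_def by (simp add: g M_def algebra_simps)
    moreover have "a \<noteq> (a + 2) * M"
    proof
      assume "a = (a + 2) * M"
      then have "M dvd a" by (metis dvd_triv_right)
      moreover have "\<bar>a\<bar> < M" using a unfolding M_def by auto
      ultimately have "a = 0" using dvd_imp_le_int[of a M] by fastforce
      with \<open>a = (a + 2) * M\<close> show False unfolding M_def by simp
    qed
    ultimately show ?thesis using 2 distinct by auto
  next
    case 3
    then show ?thesis using t distinct i(2) unfolding M_def by (auto simp: g)
  next
    case 4
    then show ?thesis using t distinct i(3) T_ge_2 unfolding M_def by (auto simp: g)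
  next
    case 5
    then show ?thesis using t distinct i(2,3) unfolding M_def by (auto simp: g)
  qed
qed

lemma off_block:
  assumes i: "i \<in> {1..2*\<delta>}" "i \<noteq> j" "i \<noteq> partner j"
  shows "c i = 0"
proof -
  have "{(t, k)\<in>{1..T} \<times> {1..2*\<delta>}.
      (int t - int T + 1) * off_block_freq i k + (int t - 1) * off_block_freq i j = 2 * int T} = {(T, i)}"
    using off_block_resonance[OF i] off_block_resonance[OF i, of T i] T_ge_2 i(1) by auto
  moreover have "int T * off_block_freq i j \<noteq> 2 * int T"
    using T_ge_2 row i(2) partner_neq[of j] by (simp add: off_block_freq_eq[OF i(1)] row_freq_eq)
  ultimately have "p T * c i = 0"
    using coefficients[of "\<lambda>m. pair_freq 1 j m + pair_freq (int T + 1) i m" "2 * int T",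
        folded off_block_freq_def] by simp
  then show ?thesis using diagonal by auto
qed

lemma block_coefficients:
  "(\<Sum>t=1..T. \<Sum>i\<in>{j, partner j}.
      if (int t - int T + 1) * lam_freq f i + (int t - 1) * lam_freq f j = n then p t * c i else 0)
    = (if int T * lam_freq f j = n then 1 else 0)"
proof -
  let ?E = "\<lambda>t i. (int t - int T + 1) * lam_freq f i + (int t - 1) * lam_freq f j"
  have "(\<Sum>t=1..T. \<Sum>i\<in>{j, partner j}. if ?E t i = n then p t * c i else 0)
      = (\<Sum>t=1..T. \<Sum>i=1..2*\<delta>. if ?E t i = n then p t * c i else 0)"
    using row partner_in_range[OF row] off_block by (intro sum.cong refl sum.mono_neutral_left) auto
  also have "\<dots> = (\<Sum>(t, i)\<in>{1..T} \<times> {1..2*\<delta>}. if ?E t i = n then p t * c i else 0)"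
    by (simp add: sum.cartesian_product)
  also have "\<dots> = (\<Sum>(t, i)\<in>{(t, i)\<in>{1..T} \<times> {1..2*\<delta>}. ?E t i = n}. p t * c i)"
    by (rule sum.mono_neutral_cong_right) (auto split: if_splits)
  also have "\<dots> = (if int T * lam_freq f j = n then 1 else 0)"
    by (rule coefficients)
  finally show ?thesis .
qed

lemma earlier_positions_vanish:
  assumes "t0 \<in> {1..<T - 1}"
  shows "p t0 = 0"
proof -
  have "(\<Sum>t=1..T. \<Sum>i\<in>{j, partner j}.
      if (int t - int T + 1) * row_freq i + (int t - 1) * row_freq j = 2 * int t0 - int T
      then p t * c i else 0)
    = (\<Sum>t=1..T. if t = t0 then p t * c j else 0)"
    using assms row partner_neq[of j] by (intro sum.cong refl) (auto simp: row_freq_eq)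
  also have "\<dots> = p t0 * c j" using assms by auto
  finally have "p t0 * c j = 0"
    using block_coefficients[of "pair_freq 1 j" "2 * int t0 - int T", folded row_freq_def] assms
    by (auto simp: row_freq_eq)
  then show ?thesis using diagonal by auto
qed

lemma partner_relation: "p T * c (partner j) + (c j + c (partner j)) * p (T - 1) = 0"
proof -
  have "(\<Sum>t=1..T. \<Sum>i\<in>{j, partner j}.
      if (int t - int T + 1) * row_freq i + (int t - 1) * row_freq j = int T - 2 then p t * c i else 0)
    = (\<Sum>t=1..T. (if t = T - 1 then p t * c j else 0) + p t * c (partner j))"
    using T_ge_2 row partner_neq[of j] by (intro sum.cong refl) (auto simp: row_freq_eq)
  also have "\<dots> = p (T - 1) * c j + (\<Sum>t=1..T. p t) * c (partner j)"
    using T_ge_2 by (simp add: sum.distrib sum_distrib_right)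
  also have "(\<Sum>t=1..T. p t) = p (T - 1) + p T"
  proof -
    obtain K where K: "T = Suc (Suc K)" using T_ge_2 by (metis add_2_eq_Suc le_Suc_ex)
    have "(\<Sum>t=1..K. p t) = 0" using earlier_positions_vanish unfolding K by auto
    then show ?thesis unfolding K by simp
  qed
  finally have "p (T - 1) * c j + (p (T - 1) + p T) * c (partner j) = 0"
    using block_coefficients[of "pair_freq 1 j" "int T - 2", folded row_freq_def] by (simp add: row_freq_eq)
  then show ?thesis by (simp add: algebra_simps)
qed

end

lemma row_coefficients_of_loss_eq_0:
  assumes loss: "loss \<delta> H Tmax A B P = 0" and T: "T \<in> {2..Tmax}" and j: "j \<in> {1..2*\<delta>}"
  shows "row_coefficients \<delta> T j (P (T - 1)) (Cmat H A B j)"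
proof
  show "2 \<le> T" "j \<in> {1..2*\<delta>}" using T j by auto
next
  fix f n
  define E where "E = (\<lambda>(t, i). (int t - int T + 1) * lam_freq f i + (int t - 1) * lam_freq f j)"
  define c where "c = (\<lambda>(t, i). P (T - 1) t * Cmat H A B j i)"
  have "(\<Sum>k\<in>{k\<in>{1..T} \<times> {1..2*\<delta>}. E k = n}. c k) = (if int T * lam_freq f j = n then 1 else 0)"
  proof (rule coeffs_eq_if_eq_at_unity_roots)
    fix N r :: nat
    define \<mu> where "\<mu> = (\<lambda>m. unity_root N (int r * f m))"
    have "\<mu> \<in> torus \<delta>" by (simp add: \<mu>_def torus_def unity_root_def)
    then have "model \<delta> H A B P \<mu> T j = evec \<mu> (T + 1) j"
      by (rule model_eq_evec_on_torus[OF loss T _ j])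
    then show "(\<Sum>k\<in>{1..T} \<times> {1..2*\<delta>}. of_real (c k) * unity_root N (int r * E k))
        = unity_root N (int r * (int T * lam_freq f j))"
      using model_at_unity_root_point[of T \<delta> H A B P N r f j] T
      unfolding \<mu>_def E_def c_def evec_def lam_unity_root_point
      by (simp add: unity_root_power case_prod_unfold mult_ac)
  qed simp
  moreover have "{k\<in>{1..T} \<times> {1..2*\<delta>}. E k = n}
      = {(t, i)\<in>{1..T} \<times> {1..2*\<delta>}. (int t - int T + 1) * lam_freq f i + (int t - 1) * lam_freq f j = n}"
    unfolding E_def by auto
  ultimately show "(\<Sum>(t, i)\<in>{(t, i)\<in>{1..T} \<times> {1..2*\<delta>}.
        (int t - int T + 1) * lam_freq f i + (int t - 1) * lam_freq f j = n}. P (T - 1) t * Cmat H A B j i)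
      = (if int T * lam_freq f j = n then 1 else 0)"
    unfolding c_def by simp
qed

theorem proposition6:
  fixes \<delta> H Tmax :: nat
    and A B P :: "nat \<Rightarrow> nat \<Rightarrow> real"
  assumes "\<delta> \<ge> 1" and "H \<ge> 1" and "Tmax \<ge> 2"
    and "loss \<delta> H Tmax A B P = 0"
  shows "\<forall>T\<in>{2..Tmax}.
     (\<forall>t\<in>{1..<T - 1}. P (T - 1) t = 0)
   \<and> (\<forall>i\<in>{1..2 * \<delta>}. P (T - 1) T * Cmat H A B i i = 1)
   \<and> (\<forall>i\<in>{1..\<delta>}.
        P (T - 1) T * Cmat H A B (2*i - 1) (2*i)
          + (Cmat H A B (2*i - 1) (2*i - 1) + Cmat H A B (2*i - 1) (2*i)) * P (T - 1) (T - 1) = 0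
      \<and> P (T - 1) T * Cmat H A B (2*i) (2*i - 1)
          + (Cmat H A B (2*i) (2*i) + Cmat H A B (2*i) (2*i - 1)) * P (T - 1) (T - 1) = 0)
   \<and> (\<forall>i\<in>{1..\<delta>}. \<forall>j\<in>{1..2 * \<delta>} - {2*i - 1, 2*i}.
        Cmat H A B (2*i - 1) j = 0 \<and> Cmat H A B (2*i) j = 0)"
proof (rule ballI, intro conjI)
  fix T assume T: "T \<in> {2..Tmax}"
  note row = row_coefficients_of_loss_eq_0[OF assms(4) T]
  have block: "2*i - 1 \<in> {1..2*\<delta>}" "2*i \<in> {1..2*\<delta>}" "partner (2*i - 1) = 2*i" "partner (2*i) = 2*i - 1"
    if "i \<in> {1..\<delta>}" for i
    using that by (auto simp: partner_def)
  show "\<forall>t\<in>{1..<T - 1}. P (T - 1) t = 0"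
    using row_coefficients.earlier_positions_vanish[OF row, of 1] assms(1) by auto
  show "\<forall>i\<in>{1..2 * \<delta>}. P (T - 1) T * Cmat H A B i i = 1"
    using row_coefficients.diagonal[OF row] by blast
  show "\<forall>i\<in>{1..\<delta>}.
        P (T - 1) T * Cmat H A B (2*i - 1) (2*i)
          + (Cmat H A B (2*i - 1) (2*i - 1) + Cmat H A B (2*i - 1) (2*i)) * P (T - 1) (T - 1) = 0
      \<and> P (T - 1) T * Cmat H A B (2*i) (2*i - 1)
          + (Cmat H A B (2*i) (2*i) + Cmat H A B (2*i) (2*i - 1)) * P (T - 1) (T - 1) = 0"
    using row_coefficients.partner_relation[OF row[OF block(1)]]
      row_coefficients.partner_relation[OF row[OF block(2)]] block(3,4)
    by (intro ballI) simp
  show "\<forall>i\<in>{1..\<delta>}. \<forall>j\<in>{1..2 * \<delta>} - {2*i - 1, 2*i}.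
        Cmat H A B (2*i - 1) j = 0 \<and> Cmat H A B (2*i) j = 0"
    using row_coefficients.off_block[OF row[OF block(1)]]
      row_coefficients.off_block[OF row[OF block(2)]] block(3,4)
    by (intro ballI) simp
qed

end
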